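(* Let $\mathcal{M}$ be a countable Scott set coded by $M = \bigoplus_i X_i$ and let $C \subseteq \omega^2$ be such that $\mathcal{U}^{\mathcal{M}}_C$ is an $\mathcal{M}$-cohesive largeness class. Then the class $$\langle \mathcal{U}^{\mathcal{M}}_C \rangle = \bigcap\{\mathcal{U}^X_e : e\in\omega,\ X\in\mathcal{M},\ \mathcal{U}^{\mathcal{M}}_C\cap\mathcal{U}^X_e \text{ is a largeness class}\}$$ is an $\mathcal{M}$-minimal largeness class contained in $\mathcal{U}^{\mathcal{M}}_C$.
   Context: A largeness class is a non-empty $\mathcal{A} \subseteq 2^\omega$ closed upward under $\subseteq$ such that for every finite cover $Y_0\cup\dots\cup Y_{k-1}=\omega$ some $Y_j \in \mathcal{A}$. A Scott set is a collection of sets closed under Turing reducibility and join such that every infinite binary tree in it has a path in it; it is countable coded by $M$ if it equals $\{X_i : i\in\omega\}$ with $M = \bigoplus_i X_i$. Fix an effective enumeration $\mathcal{U}^Z_0,\mathcal{U}^Z_1,\dots$ (uniform in the oracle $Z$) of all $\Sigma^0_1(Z)$ classes which are upward-closed under $\subseteq$. For $C\subseteq\omega^2$, $\mathcal{U}^{\mathcal{M}}_C = \bigcap_{\langle e,i\rangle\in C}\mathcal{U}^{X_i}_e$. For an infinite set $X$, $\mathcal{L}_X$ is the class of all sets having infinite intersection with $X$. A class $\mathcal{A}$ is $\mathcal{M}$-cohesive if for every $X \in \mathcal{M}$, either $\mathcal{A}\subseteq \mathcal{L}_X$ or $\mathcal{A}\subseteq\mathcal{L}_{\omega\setminus X}$.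 A class $\mathcal{A}$ is $\mathcal{M}$-minimal if for every $X\in\mathcal{M}$ and $e\in\omega$, either $\mathcal{A}\subseteq\mathcal{U}^X_e$ or $\mathcal{A}\cap\mathcal{U}^X_e$ is not a largeness class. *)

theory Defs
  imports Main "HOL-Library.Nat_Bijection"
begin

inductive PR :: "nat \<Rightarrow> (nat list \<Rightarrow> nat) \<Rightarrow> bool" where
  PR_zero: "PR n (\<lambda>_. 0)"
| PR_succ: "PR 1 (\<lambda>xs. Suc (xs ! 0))"
| PR_proj: "i < n \<Longrightarrow> PR n (\<lambda>xs. xs ! i)"
| PR_comp: "PR m f \<Longrightarrow> length gs = m \<Longrightarrow> (\<forall>g\<in>set gs. PR n g)
            \<Longrightarrow> PR n (\<lambda>xs. f (map (\<lambda>g. g xs) gs))"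
| PR_rec: "PR n f \<Longrightarrow> PR (Suc (Suc n)) g
           \<Longrightarrow> PR (Suc n) (\<lambda>xs. rec_nat (f (tl xs)) (\<lambda>k r. g (r # k # tl xs)) (hd xs))"

text \<open>The length-l initial segment of Z, coded by the canonical index of the finite set
  Z \<inter> {..<l}; together with l this determines the binary string Z restricted to l.\<close>
definition seg :: "nat set \<Rightarrow> nat \<Rightarrow> nat" where
  "seg Z l = set_encode (Z \<inter> {..<l})"

text \<open>W is Sigma01(Z), i.e. Z-c.e. (Kleene normal form with oracle prefixes).\<close>
definition sigma01_set :: "nat set \<Rightarrow> nat set \<Rightarrow> bool" where
  "sigma01_set Z W \<longleftrightarrow> (\<exists>p. PR 4 p \<and> W = {n. \<exists>l m. p [l, seg Z l, n, m] = 0})"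

definition turing_red :: "nat set \<Rightarrow> nat set \<Rightarrow> bool" where
  "turing_red B A \<longleftrightarrow> sigma01_set A B \<and> sigma01_set A (- B)"

definition join :: "nat set \<Rightarrow> nat set \<Rightarrow> nat set" where
  "join A B = {2 * n | n. n \<in> A} \<union> {2 * n + 1 | n. n \<in> B}"

text \<open>Binary strings of length l coded as pairs (l, canonical index of the set of positions
  carrying 1).\<close>
definition strcode :: "nat \<Rightarrow> nat set \<Rightarrow> nat" where
  "strcode l S = prod_encode (l, set_encode S)"

definition inf_bin_tree :: "nat set \<Rightarrow> bool" where
  "inf_bin_tree T \<longleftrightarrow>
     (\<forall>c\<in>T. \<exists>l S. S \<subseteq> {..<l} \<and> c = strcode l S)
   \<and> (\<forall>l S k. S \<subseteq> {..<l} \<longrightarrow> strcode l S \<in> T \<longrightarrow> k \<le> l \<longrightarrow> strcode k (S \<inter> {..<k}) \<in> T)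
   \<and> infinite T"

definition is_path :: "nat set \<Rightarrow> nat set \<Rightarrow> bool" where
  "is_path P T \<longleftrightarrow> (\<forall>l. strcode l (P \<inter> {..<l}) \<in> T)"

definition scott_set :: "nat set set \<Rightarrow> bool" where
  "scott_set S \<longleftrightarrow>
     (\<forall>A\<in>S. \<forall>B. turing_red B A \<longrightarrow> B \<in> S)
   \<and> (\<forall>A\<in>S. \<forall>B\<in>S. join A B \<in> S)
   \<and> (\<forall>T\<in>S. inf_bin_tree T \<longrightarrow> (\<exists>P\<in>S. is_path P T))"

definition upward_closed :: "nat set set \<Rightarrow> bool" where
  "upward_closed \<A> \<longleftrightarrow> (\<forall>X Y. X \<in> \<A> \<longrightarrow> X \<subseteq> Y \<longrightarrow> Y \<in> \<A>)"

text \<open>Sigma01(Z) class of sets: membership of Y is witnessed by a finite prefix of Y,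
  Z-c.e.-ly.\<close>
definition sigma01_class :: "nat set \<Rightarrow> nat set set \<Rightarrow> bool" where
  "sigma01_class Z \<U> \<longleftrightarrow>
     (\<exists>p. PR 4 p \<and> \<U> = {Y. \<exists>l m. p [l, seg Z l, seg Y l, m] = 0})"

definition effective_enum :: "(nat set \<Rightarrow> nat \<Rightarrow> nat set set) \<Rightarrow> bool" where
  "effective_enum U \<longleftrightarrow>
     (\<exists>p. PR 5 p \<and> (\<forall>Z e. U Z e = {Y. \<exists>l m. p [e, l, seg Z l, seg Y l, m] = 0}))
   \<and> (\<forall>Z e. upward_closed (U Z e))
   \<and> (\<forall>Z \<U>. sigma01_class Z \<U> \<and> upward_closed \<U> \<longrightarrow> (\<exists>e. U Z e = \<U>))"

definition largeness :: "nat set set \<Rightarrow> bool" where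
  "largeness \<A> \<longleftrightarrow> \<A> \<noteq> {} \<and> upward_closed \<A>
     \<and> (\<forall>k (Y :: nat \<Rightarrow> nat set). (\<Union>j<k. Y j) = UNIV \<longrightarrow> (\<exists>j<k. Y j \<in> \<A>))"

definition LL :: "nat set \<Rightarrow> nat set set" where
  "LL X = {Y. infinite (Y \<inter> X)}"

definition M_cohesive :: "nat set set \<Rightarrow> nat set set \<Rightarrow> bool" where
  "M_cohesive \<M> \<A> \<longleftrightarrow> (\<forall>X\<in>\<M>. \<A> \<subseteq> LL X \<or> \<A> \<subseteq> LL (- X))"

definition M_minimal :: "(nat set \<Rightarrow> nat \<Rightarrow> nat set set) \<Rightarrow> nat set set \<Rightarrow> nat set set \<Rightarrow> bool" where
  "M_minimal U \<M> \<A> \<longleftrightarrow> (\<forall>X\<in>\<M>. \<forall>e. \<A> \<subseteq> U X e \<or> \<not> largeness (\<A> \<inter> U X e))"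

text \<open>U^M_C for the countable Scott set coded by the sequence X (M = join of the X i).\<close>
definition UMC :: "(nat set \<Rightarrow> nat \<Rightarrow> nat set set) \<Rightarrow> (nat \<Rightarrow> nat set) \<Rightarrow> (nat \<times> nat) set \<Rightarrow> nat set set" where
  "UMC U X C = \<Inter>{U (X i) e | e i. (e, i) \<in> C}"

definition gen_class :: "(nat set \<Rightarrow> nat \<Rightarrow> nat set set) \<Rightarrow> (nat \<Rightarrow> nat set) \<Rightarrow> (nat \<times> nat) set \<Rightarrow> nat set set" where
  "gen_class U X C = \<Inter>{U Z e | e Z. Z \<in> range X \<and> largeness (UMC U X C \<inter> U Z e)}"

end

theory Submission
  imports Defs
begin

text \<open>The generated class lies inside \<open>UMC U X C\<close>, because every \<open>U (X i) e\<close> with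
  \<open>(e, i) \<in> C\<close> has \<open>UMC U X C\<close> itself as large trace, and \<open>\<M>\<close>-minimality is immediate
  from its definition. The content is partition regularity. If a cover \<open>Y 0, \<dots>, Y (k - 1)\<close>
  had no piece in the generated class, each \<open>Y j\<close> would avoid some class \<open>U Z\<^sub>j e\<^sub>j\<close>
  whose trace on \<open>UMC U X C\<close> is large. All \<open>Z\<^sub>j\<close> reduce to a single \<open>Z \<in> \<M>\<close>, and the
  covers avoiding these finitely many \<open>\<Sigma>\<^sup>0\<^sub>1(Z)\<close> classes, written as the interleaved columns
  of one set, are the paths of a \<open>Z\<close>-computable infinite binary tree; a path in \<open>\<M>\<close> yields
  such a cover by sets of \<open>\<M>\<close>. One of its pieces lies in \<open>UMC U X C\<close>, and by cohesiveness
  a set of \<open>\<M>\<close> in \<open>UMC U X C\<close> belongs to every largeness subclass of it, in particular to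
  the class it was supposed to avoid.\<close>

section \<open>Primitive recursive functions up to extensionality\<close>

definition prim_rec :: "nat \<Rightarrow> (nat list \<Rightarrow> nat) \<Rightarrow> bool" where
  "prim_rec n f \<longleftrightarrow> (\<exists>g. PR n g \<and> (\<forall>xs. length xs = n \<longrightarrow> g xs = f xs))"

definition prim_rec_pred :: "nat \<Rightarrow> (nat list \<Rightarrow> bool) \<Rightarrow> bool" where
  "prim_rec_pred n P \<longleftrightarrow> prim_rec n (\<lambda>xs. if P xs then 1 else 0)"

lemma prim_rec_cong:
  "prim_rec n f \<Longrightarrow> (\<And>xs. length xs = n \<Longrightarrow> f xs = g xs) \<Longrightarrow> prim_rec n g"
  unfolding prim_rec_def by metis

lemma PR_imp_prim_rec: "PR n f \<Longrightarrow> prim_rec n f"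
  unfolding prim_rec_def by blast

lemma prim_rec_PR_obtain:
  assumes "prim_rec n f"
  obtains g where "PR n g" "\<And>xs. length xs = n \<Longrightarrow> g xs = f xs"
  using assms unfolding prim_rec_def by blast

lemma prim_rec_zero: "prim_rec n (\<lambda>_. 0)"
  by (rule PR_imp_prim_rec, rule PR_zero)

lemma prim_rec_proj: "i < n \<Longrightarrow> prim_rec n (\<lambda>xs. xs ! i)"
  by (rule PR_imp_prim_rec, rule PR_proj)

lemma prim_rec_list_PR_obtain:
  assumes "\<forall>g\<in>set gs. prim_rec n g"
  obtains gs' where "length gs' = length gs" "\<forall>g\<in>set gs'. PR n g"
    "\<And>xs. length xs = n \<Longrightarrow> map (\<lambda>g. g xs) gs' = map (\<lambda>g. g xs) gs"
  using assms
proof (induction gs arbitrary: thesis)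
  case Nil
  then show ?case by simp
next
  case (Cons g gs)
  obtain gs' where gs': "length gs' = length gs" "\<forall>g\<in>set gs'. PR n g"
    "\<And>xs. length xs = n \<Longrightarrow> map (\<lambda>g. g xs) gs' = map (\<lambda>g. g xs) gs"
    using Cons.IH Cons.prems(2) by auto
  obtain h where "PR n h" "\<And>xs. length xs = n \<Longrightarrow> h xs = g xs"
    using Cons.prems(2) prim_rec_PR_obtain by auto
  then show ?case
    using Cons.prems(1)[of "h # gs'"] gs' by auto
qed

lemma prim_rec_comp:
  assumes "prim_rec m f" "length gs = m" "\<forall>g\<in>set gs. prim_rec n g"
  shows "prim_rec n (\<lambda>xs. f (map (\<lambda>g. g xs) gs))"
proof -
  obtain f' where f': "PR m f'" "\<And>xs. length xs = m \<Longrightarrow> f' xs = f xs"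
    using assms(1) prim_rec_PR_obtain by blast
  obtain gs' where gs': "length gs' = length gs" "\<forall>g\<in>set gs'. PR n g"
    "\<And>xs. length xs = n \<Longrightarrow> map (\<lambda>g. g xs) gs' = map (\<lambda>g. g xs) gs"
    using prim_rec_list_PR_obtain[OF assms(3)] by blast
  have "PR n (\<lambda>xs. f' (map (\<lambda>g. g xs) gs'))"
    using PR_comp[OF f'(1)] gs' assms(2) by auto
  moreover have "f' (map (\<lambda>g. g xs) gs') = f (map (\<lambda>g. g xs) gs)" if "length xs = n" for xs
    using f'(2) gs' assms(2) that by (metis length_map)
  ultimately show ?thesis
    unfolding prim_rec_def by blast
qed

lemma prim_rec_rec:
  assumes "prim_rec n f" "prim_rec (Suc (Suc n)) g"
  shows "prim_rec (Suc n) (\<lambda>xs. rec_nat (f (tl xs)) (\<lambda>k r. g (r # k # tl xs)) (hd xs))"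
proof -
  obtain f' where f': "PR n f'" "\<And>xs. length xs = n \<Longrightarrow> f' xs = f xs"
    using assms(1) prim_rec_PR_obtain by blast
  obtain g' where g': "PR (Suc (Suc n)) g'" "\<And>xs. length xs = Suc (Suc n) \<Longrightarrow> g' xs = g xs"
    using assms(2) prim_rec_PR_obtain by blast
  have "rec_nat (f' (tl xs)) (\<lambda>k r. g' (r # k # tl xs)) x
      = rec_nat (f (tl xs)) (\<lambda>k r. g (r # k # tl xs)) x" if "length xs = Suc n" for xs x
    using that f'(2) g'(2) by (induction x) auto
  then show ?thesis
    using PR_rec[OF f'(1) g'(1)] unfolding prim_rec_def by blast
qed

lemma prim_rec_Suc: "prim_rec n a \<Longrightarrow> prim_rec n (\<lambda>xs. Suc (a xs))"
  using prim_rec_comp[OF PR_imp_prim_rec[OF PR_succ], of "[a]" n] by simp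

lemma prim_rec_const: "prim_rec n (\<lambda>_. c)"
  by (induction c) (auto intro: prim_rec_zero dest: prim_rec_Suc)

lemma prim_rec_app1: "prim_rec 1 f \<Longrightarrow> prim_rec n a \<Longrightarrow> prim_rec n (\<lambda>xs. f [a xs])"
  using prim_rec_comp[of 1 f "[a]" n] by simp

lemma prim_rec_app2:
  "prim_rec 2 f \<Longrightarrow> prim_rec n a \<Longrightarrow> prim_rec n b \<Longrightarrow> prim_rec n (\<lambda>xs. f [a xs, b xs])"
  using prim_rec_comp[of 2 f "[a, b]" n] by simp

lemma prim_rec_app4:
  "prim_rec 4 f \<Longrightarrow> prim_rec n a \<Longrightarrow> prim_rec n b \<Longrightarrow> prim_rec n c \<Longrightarrow> prim_rec n d
   \<Longrightarrow> prim_rec n (\<lambda>xs. f [a xs, b xs, c xs, d xs])"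
  using prim_rec_comp[of 4 f "[a, b, c, d]" n] by simp

lemma prim_rec_app5:
  "prim_rec 5 f \<Longrightarrow> prim_rec n a \<Longrightarrow> prim_rec n b \<Longrightarrow> prim_rec n c \<Longrightarrow> prim_rec n d
   \<Longrightarrow> prim_rec n e \<Longrightarrow> prim_rec n (\<lambda>xs. f [a xs, b xs, c xs, d xs, e xs])"
  using prim_rec_comp[of 5 f "[a, b, c, d, e]" n] by simp

lemma prim_rec_tl:
  assumes f: "prim_rec n f"
  shows "prim_rec (Suc n) (\<lambda>ys. f (tl ys))"
proof -
  have "prim_rec (Suc n) (\<lambda>ys. f (map (\<lambda>g. g ys) (map (\<lambda>i ys. ys ! Suc i) [0..<n])))"
    by (rule prim_rec_comp[OF f]) (auto intro: prim_rec_proj)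
  then show ?thesis
    by (rule prim_rec_cong) (auto simp: length_Suc_conv comp_def map_nth)
qed

lemma prim_rec_hd: "prim_rec (Suc n) hd"
  by (rule prim_rec_cong[OF prim_rec_proj[of 0 "Suc n"]]) (auto simp: length_Suc_conv)

lemma prim_rec_Cons:
  assumes f: "prim_rec (Suc n) f" and a: "prim_rec n a"
  shows "prim_rec n (\<lambda>xs. f (a xs # xs))"
proof -
  have "prim_rec n (\<lambda>xs. f (map (\<lambda>g. g xs) (a # map (\<lambda>i xs. xs ! i) [0..<n])))"
    by (rule prim_rec_comp[OF f]) (use a in \<open>auto intro: prim_rec_proj\<close>)
  then show ?thesis
    by (rule prim_rec_cong) (auto simp: comp_def map_nth)
qed

lemma prim_rec_binary_rec:
  assumes "prim_rec 1 f" "prim_rec 3 g"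
    and "\<And>a b. h a b = rec_nat (f [b]) (\<lambda>k r. g [r, k, b]) a"
  shows "prim_rec 2 (\<lambda>xs. h (xs ! 0) (xs ! 1))"
proof -
  have "prim_rec (Suc 1) (\<lambda>xs. rec_nat (f (tl xs)) (\<lambda>k r. g (r # k # tl xs)) (hd xs))"
    by (rule prim_rec_rec) (use assms(1,2) in \<open>simp_all add: numeral_3_eq_3\<close>)
  then have "prim_rec 2 (\<lambda>xs. rec_nat (f (tl xs)) (\<lambda>k r. g (r # k # tl xs)) (hd xs))"
    by (simp only: Suc_1)
  then show ?thesis
    by (rule prim_rec_cong) (auto simp: assms(3) length_Suc_conv numeral_2_eq_2)
qed

lemma prim_rec_add: "prim_rec n a \<Longrightarrow> prim_rec n b \<Longrightarrow> prim_rec n (\<lambda>xs. a xs + b xs)"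
proof -
  have "rec_nat b (\<lambda>k r. Suc r) a = a + b" for a b :: nat
    by (induction a) auto
  then have "prim_rec 2 (\<lambda>xs. xs ! 0 + xs ! 1)"
    by (intro prim_rec_binary_rec[where f = "\<lambda>xs. xs ! 0" and g = "\<lambda>xs. Suc (xs ! 0)"]
        prim_rec_Suc prim_rec_proj) auto
  then show "prim_rec n a \<Longrightarrow> prim_rec n b \<Longrightarrow> prim_rec n (\<lambda>xs. a xs + b xs)"
    using prim_rec_app2 by fastforce
qed

lemma prim_rec_mult: "prim_rec n a \<Longrightarrow> prim_rec n b \<Longrightarrow> prim_rec n (\<lambda>xs. a xs * b xs)"
proof -
  have "rec_nat 0 (\<lambda>k r. r + b) a = a * b" for a b :: nat
    by (induction a) auto
  then have "prim_rec 2 (\<lambda>xs. xs ! 0 * xs ! 1)"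
    by (intro prim_rec_binary_rec[where f = "\<lambda>_. 0" and g = "\<lambda>xs. xs ! 0 + xs ! 2"]
        prim_rec_add prim_rec_proj prim_rec_const) auto
  then show "prim_rec n a \<Longrightarrow> prim_rec n b \<Longrightarrow> prim_rec n (\<lambda>xs. a xs * b xs)"
    using prim_rec_app2 by fastforce
qed

lemma prim_rec_decr: "prim_rec n a \<Longrightarrow> prim_rec n (\<lambda>xs. a xs - 1)"
proof -
  have "prim_rec (Suc 0) (\<lambda>xs. rec_nat 0 (\<lambda>k r. (r # k # tl xs) ! 1) (hd xs))"
    by (rule prim_rec_rec[OF prim_rec_const prim_rec_proj]) simp
  moreover have "rec_nat 0 (\<lambda>k r. k) a = a - 1" for a :: nat
    by (cases a) auto
  ultimately have "prim_rec 1 (\<lambda>xs. xs ! 0 - 1)"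
    by (auto simp: length_Suc_conv elim!: prim_rec_cong)
  then show "prim_rec n a \<Longrightarrow> prim_rec n (\<lambda>xs. a xs - 1)"
    using prim_rec_app1 by fastforce
qed

lemma prim_rec_diff: "prim_rec n a \<Longrightarrow> prim_rec n b \<Longrightarrow> prim_rec n (\<lambda>xs. a xs - b xs)"
proof -
  have "prim_rec 2 (\<lambda>xs. xs ! 1 - xs ! 0)"
  proof (intro prim_rec_binary_rec[where f = "\<lambda>xs. xs ! 0" and g = "\<lambda>xs. xs ! 0 - 1"]
      prim_rec_decr prim_rec_proj)
    show "b - a = rec_nat ([b] ! 0) (\<lambda>k r. [r, k, b] ! 0 - 1) a" for a b :: nat
      by (induction a) auto
  qed simp_all
  then show "prim_rec n a \<Longrightarrow> prim_rec n b \<Longrightarrow> prim_rec n (\<lambda>xs. a xs - b xs)"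
    using prim_rec_app2[of _ n b a] by fastforce
qed

lemma prim_rec_power: "prim_rec n a \<Longrightarrow> prim_rec n b \<Longrightarrow> prim_rec n (\<lambda>xs. a xs ^ b xs)"
proof -
  have "rec_nat 1 (\<lambda>k r. r * a) b = a ^ b" for a b :: nat
    by (induction b) auto
  then have "prim_rec 2 (\<lambda>xs. xs ! 1 ^ xs ! 0)"
    by (intro prim_rec_binary_rec[where f = "\<lambda>_. 1" and g = "\<lambda>xs. xs ! 0 * xs ! 2"]
        prim_rec_mult prim_rec_proj prim_rec_const) auto
  then show "prim_rec n a \<Longrightarrow> prim_rec n b \<Longrightarrow> prim_rec n (\<lambda>xs. a xs ^ b xs)"
    using prim_rec_app2[of _ n b a] by fastforce
qed

lemma prim_rec_pred_le:
  assumes "prim_rec n a" "prim_rec n b"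
  shows "prim_rec_pred n (\<lambda>xs. a xs \<le> b xs)"
  unfolding prim_rec_pred_def
  by (rule prim_rec_cong[OF prim_rec_diff[OF prim_rec_const prim_rec_diff[OF assms]], of 1]) auto

lemma prim_rec_pred_less: "prim_rec n a \<Longrightarrow> prim_rec n b \<Longrightarrow> prim_rec_pred n (\<lambda>xs. a xs < b xs)"
  using prim_rec_pred_le[OF prim_rec_Suc] by (simp add: Suc_le_eq)

lemma prim_rec_pred_not:
  assumes "prim_rec_pred n P"
  shows "prim_rec_pred n (\<lambda>xs. \<not> P xs)"
  unfolding prim_rec_pred_def
  by (rule prim_rec_cong[OF prim_rec_diff[OF prim_rec_const[of n 1]
        assms[unfolded prim_rec_pred_def]]]) auto

lemma prim_rec_pred_conj:
  assumes "prim_rec_pred n P" "prim_rec_pred n Q"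
  shows "prim_rec_pred n (\<lambda>xs. P xs \<and> Q xs)"
  unfolding prim_rec_pred_def
  by (rule prim_rec_cong[OF prim_rec_mult[OF assms[unfolded prim_rec_pred_def]]]) auto

lemma prim_rec_pred_disj:
  "prim_rec_pred n P \<Longrightarrow> prim_rec_pred n Q \<Longrightarrow> prim_rec_pred n (\<lambda>xs. P xs \<or> Q xs)"
  using prim_rec_pred_not[OF prim_rec_pred_conj[OF prim_rec_pred_not prim_rec_pred_not]] by simp

lemma prim_rec_pred_imp:
  "prim_rec_pred n P \<Longrightarrow> prim_rec_pred n Q \<Longrightarrow> prim_rec_pred n (\<lambda>xs. P xs \<longrightarrow> Q xs)"
  using prim_rec_pred_disj[OF prim_rec_pred_not] by simp

lemma prim_rec_pred_eq: "prim_rec n a \<Longrightarrow> prim_rec n b \<Longrightarrow> prim_rec_pred n (\<lambda>xs. a xs = b xs)"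
  using prim_rec_pred_conj[OF prim_rec_pred_le prim_rec_pred_le, of n a b b a]
  by (simp add: order_eq_iff)

lemma prim_rec_if:
  assumes "prim_rec_pred n P" "prim_rec n a" "prim_rec n b"
  shows "prim_rec n (\<lambda>xs. if P xs then a xs else b xs)"
proof -
  have P: "prim_rec n (\<lambda>xs. if P xs then 1 else 0)"
    using assms(1) unfolding prim_rec_pred_def .
  show ?thesis
    by (rule prim_rec_cong[OF prim_rec_add[OF prim_rec_mult[OF P assms(2)]
          prim_rec_mult[OF prim_rec_diff[OF prim_rec_const[of n 1] P] assms(3)]]]) auto
qed

lemma prim_rec_mod: "prim_rec n a \<Longrightarrow> prim_rec n b \<Longrightarrow> prim_rec n (\<lambda>xs. a xs mod b xs)"
proof -
  have "prim_rec 2 (\<lambda>xs. xs ! 0 mod xs ! 1)"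
  proof (intro prim_rec_binary_rec[where f = "\<lambda>_. 0"
        and g = "\<lambda>xs. if Suc (xs ! 0) = xs ! 2 then 0 else Suc (xs ! 0)"]
      prim_rec_if prim_rec_pred_eq prim_rec_Suc prim_rec_proj prim_rec_const)
    show "a mod b = rec_nat 0 (\<lambda>k r. if Suc ([r, k, b] ! 0) = [r, k, b] ! 2 then 0
        else Suc ([r, k, b] ! 0)) a" for a b :: nat
      by (induction a) (auto simp: mod_Suc)
  qed simp_all
  then show "prim_rec n a \<Longrightarrow> prim_rec n b \<Longrightarrow> prim_rec n (\<lambda>xs. a xs mod b xs)"
    using prim_rec_app2 by fastforce
qed

lemma prim_rec_sum_lessThan:
  assumes B: "prim_rec n B" and F: "prim_rec (Suc n) (\<lambda>ys. F (hd ys) (tl ys))"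
  shows "prim_rec n (\<lambda>xs. \<Sum>i<B xs. F i xs)"
proof -
  have "prim_rec (Suc n) (\<lambda>ys. rec_nat 0 (\<lambda>k r. (r # k # tl ys) ! 0
      + F (hd (tl (r # k # tl ys))) (tl (tl (r # k # tl ys)))) (hd ys))"
    by (rule prim_rec_rec[OF prim_rec_const prim_rec_add[OF prim_rec_proj prim_rec_tl[OF F]]]) simp
  moreover have "rec_nat 0 (\<lambda>k r. r + F k xs) i = (\<Sum>j<i. F j xs)" for i xs
    by (induction i) auto
  ultimately have "prim_rec (Suc n) (\<lambda>ys. \<Sum>j<hd ys. F j (tl ys))"
    by simp
  from prim_rec_Cons[OF this B] show ?thesis
    by simp
qed

lemma prim_rec_pred_bex_lessThan:
  assumes B: "prim_rec n B" and P: "prim_rec_pred (Suc n) (\<lambda>ys. P (hd ys) (tl ys))"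
  shows "prim_rec_pred n (\<lambda>xs. \<exists>i<B xs. P i xs)"
proof -
  have zero_iff: "(\<Sum>i<b. if Q i then 1 else (0::nat)) = 0 \<longleftrightarrow> (\<forall>i<b. \<not> Q i)"
    for b :: nat and Q
    by (induction b) (auto simp: less_Suc_eq)
  have pos_iff: "0 < (\<Sum>i<b. if Q i then 1 else (0::nat)) \<longleftrightarrow> (\<exists>i<b. Q i)"
    for b :: nat and Q
    unfolding zero_less_iff_neq_zero zero_iff by blast
  have "prim_rec n (\<lambda>xs. \<Sum>i<B xs. if P i xs then 1 else 0)"
    by (rule prim_rec_sum_lessThan[OF B P[unfolded prim_rec_pred_def]])
  then have "prim_rec_pred n (\<lambda>xs. 0 < (\<Sum>i<B xs. if P i xs then 1 else (0::nat)))"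
    by (rule prim_rec_pred_less[OF prim_rec_const])
  then show ?thesis
    unfolding pos_iff .
qed

lemma prim_rec_pred_ball_lessThan:
  assumes B: "prim_rec n B" and P: "prim_rec_pred (Suc n) (\<lambda>ys. P (hd ys) (tl ys))"
  shows "prim_rec_pred n (\<lambda>xs. \<forall>i<B xs. P i xs)"
proof -
  have "prim_rec_pred n (\<lambda>xs. \<not> (\<exists>i<B xs. \<not> P i xs))"
    by (intro prim_rec_pred_not prim_rec_pred_bex_lessThan[OF B] P)
  then show ?thesis
    by simp
qed

lemma prim_rec_table:
  assumes a: "prim_rec n a"
  shows "prim_rec n (\<lambda>xs. if a xs < k then F (a xs) else 0)"
proof (induction k)
  case 0
  then show ?case by (simp add: prim_rec_const)
next
  case (Suc k)
  have "prim_rec n (\<lambda>xs. if a xs = k then F k else if a xs < k then F (a xs) else 0)"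
    by (rule prim_rec_if[OF prim_rec_pred_eq[OF a prim_rec_const] prim_rec_const Suc])
  then show ?case
    by (rule prim_rec_cong) (auto simp: less_Suc_eq)
qed

lemma prim_rec_prod_encode:
  assumes "prim_rec n a" "prim_rec n b"
  shows "prim_rec n (\<lambda>xs. prod_encode (a xs, b xs))"
proof -
  have "prim_rec (Suc 0)
      (\<lambda>xs. rec_nat 0 (\<lambda>k r. (r # k # tl xs) ! 0 + Suc ((r # k # tl xs) ! 1)) (hd xs))"
    by (rule prim_rec_rec[OF prim_rec_const prim_rec_add[OF prim_rec_proj prim_rec_Suc[OF prim_rec_proj]]])
      auto
  moreover have "rec_nat 0 (\<lambda>k r. r + Suc k) x = triangle x" for x
    by (induction x) auto
  ultimately have "prim_rec 1 (\<lambda>xs. triangle (xs ! 0))"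
    by (auto simp: length_Suc_conv elim!: prim_rec_cong)
  from prim_rec_add[OF prim_rec_app1[OF this prim_rec_add[OF assms]] assms(1)] show ?thesis
    by (simp add: prod_encode_def)
qed

lemma mem_set_decode_iff_mod: "x \<in> set_decode s \<longleftrightarrow> 2 ^ x \<le> s mod 2 ^ Suc x"
proof -
  have split: "s mod 2 ^ Suc x = 2 ^ x * (s div 2 ^ x mod 2) + s mod 2 ^ x"
    by (subst power_Suc2, rule mod_mult2_eq)
  have low: "s mod 2 ^ x < 2 ^ x"
    by simp
  have mem: "x \<in> set_decode s \<longleftrightarrow> s div 2 ^ x mod 2 = 1"
    by (simp add: set_decode_def odd_iff_mod_2_eq_one)
  have "s div 2 ^ x mod 2 = 0 \<or> s div 2 ^ x mod 2 = 1"
    by arith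
  then show ?thesis
  proof
    assume "s div 2 ^ x mod 2 = 0"
    then show ?thesis unfolding mem split using low by (simp add: not_le)
  next
    assume "s div 2 ^ x mod 2 = 1"
    then show ?thesis unfolding mem split by simp
  qed
qed

lemma prim_rec_pred_mem_set_decode:
  "prim_rec n a \<Longrightarrow> prim_rec n s \<Longrightarrow> prim_rec_pred n (\<lambda>xs. a xs \<in> set_decode (s xs))"
  unfolding mem_set_decode_iff_mod
  by (intro prim_rec_pred_le prim_rec_power prim_rec_mod prim_rec_Suc prim_rec_const)

lemma seg_eq_sum: "seg S l = (\<Sum>i<l. if i \<in> S then 2 ^ i else 0)"
proof (induction l)
  case 0
  then show ?case by (simp add: seg_def)
next
  case (Suc l)
  then show ?case
    by (cases "l \<in> S") (auto simp: seg_def lessThan_Suc Int_insert_right)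
qed

lemma prim_rec_seg_set_decode:
  assumes "prim_rec n s" "prim_rec n l" "prim_rec (Suc n) (\<lambda>ys. g (hd ys) (tl ys))"
  shows "prim_rec n (\<lambda>xs. seg {i. g i xs \<in> set_decode (s xs)} (l xs))"
  unfolding seg_eq_sum mem_Collect_eq
  by (intro prim_rec_sum_lessThan prim_rec_if prim_rec_pred_mem_set_decode prim_rec_power
      prim_rec_const prim_rec_hd prim_rec_tl assms)

lemmas prim_rec_intros = prim_rec_const prim_rec_proj prim_rec_hd prim_rec_tl prim_rec_Suc
  prim_rec_add prim_rec_diff prim_rec_mult prim_rec_power prim_rec_mod prim_rec_if
  prim_rec_sum_lessThan prim_rec_prod_encode prim_rec_seg_set_decode
  prim_rec_pred_le prim_rec_pred_less prim_rec_pred_eq prim_rec_pred_not prim_rec_pred_conj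
  prim_rec_pred_disj prim_rec_pred_imp prim_rec_pred_bex_lessThan prim_rec_pred_ball_lessThan
  prim_rec_pred_mem_set_decode

lemma mem_set_decode_iff_bit: "n \<in> set_decode x \<longleftrightarrow> bit x n"
  unfolding set_decode_def bit_iff_odd by simp

lemma set_decode_mod_power: "set_decode (x mod 2 ^ l) = set_decode x \<inter> {..<l}"
  by (auto simp: mem_set_decode_iff_bit simp flip: take_bit_eq_mod simp add: bit_take_bit_iff)

lemma set_decode_seg: "set_decode (seg Z l) = Z \<inter> {..<l}"
  by (simp add: seg_def)

lemma seg_mod_power:
  assumes "l \<le> L"
  shows "seg Z L mod 2 ^ l = seg Z l"
proof -
  have "set_decode (seg Z L mod 2 ^ l) = set_decode (seg Z l)"
    using assms by (auto simp: set_decode_mod_power set_decode_seg)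
  then show ?thesis
    by (metis set_decode_inverse)
qed

lemma seg_cong: "(\<And>i. i < l \<Longrightarrow> i \<in> A \<longleftrightarrow> i \<in> B) \<Longrightarrow> seg A l = seg B l"
  unfolding seg_def by (rule arg_cong[where f = set_encode]) auto

lemma set_decode_subset_lessThan: "s < 2 ^ l \<Longrightarrow> set_decode s \<subseteq> {..<l}"
  by (metis Int_lower2 mod_less set_decode_mod_power)

lemma set_encode_less_power:
  assumes "S \<subseteq> {..<l}"
  shows "set_encode S < 2 ^ l"
proof -
  have "finite S"
    using assms finite_subset by blast
  then have "set_decode (set_encode S mod 2 ^ l) = set_decode (set_encode S)"
    using assms by (auto simp: set_decode_mod_power)
  then have "set_encode S mod 2 ^ l = set_encode S"
    by (metis set_decode_inverse)
  then show ?thesis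
    by (metis mod_less_divisor zero_less_numeral zero_less_power)
qed

lemma strcode_inj:
  assumes "S \<subseteq> {..<l}" "S' \<subseteq> {..<l'}" "strcode l S = strcode l' S'"
  shows "l = l' \<and> S = S'"
  using assms set_encode_eq[of S S'] finite_subset[OF assms(1)] finite_subset[OF assms(2)]
  by (simp add: strcode_def)

section \<open>Relative computability\<close>

lemma sigma01_classI:
  assumes "prim_rec 4 q" "\<U> = {Y. \<exists>l m. q [l, seg Z l, seg Y l, m] = 0}"
  shows "sigma01_class Z \<U>"
proof -
  obtain g where "PR 4 g" "\<And>xs. length xs = 4 \<Longrightarrow> g xs = q xs"
    using assms(1) prim_rec_PR_obtain by blast
  then show ?thesis
    unfolding sigma01_class_def assms(2) by (intro exI[of _ g]) simp
qed

lemma sigma01_setI: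
  assumes "prim_rec 4 q" "W = {n. \<exists>l m. q [l, seg Z l, n, m] = 0}"
  shows "sigma01_set Z W"
proof -
  obtain g where "PR 4 g" "\<And>xs. length xs = 4 \<Longrightarrow> g xs = q xs"
    using assms(1) prim_rec_PR_obtain by blast
  then show ?thesis
    unfolding sigma01_set_def assms(2) by (intro exI[of _ g]) simp
qed

text \<open>A set decided primitive recursively from a segment of \<open>Z\<close> of primitive recursive
  length is \<open>\<Sigma>\<^sup>0\<^sub>1(Z)\<close>: the search runs over the segment lengths \<open>l\<close> and
  waits until \<open>l\<close> exceeds the use.\<close>

lemma sigma01_set_if_prim_rec_decided:
  assumes Q: "prim_rec_pred 2 (\<lambda>xs. Q (xs ! 0) (xs ! 1))" and b: "prim_rec 1 (\<lambda>xs. b (xs ! 0))"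
  shows "sigma01_set Z {n. Q n (seg Z (b n))}"
proof (rule sigma01_setI)
  have b': "prim_rec n (\<lambda>xs. b (a xs))" if "prim_rec n a" for n a
    using prim_rec_app1[OF b that] by simp
  have Q': "prim_rec_pred n (\<lambda>xs. Q (a xs) (c xs))" if "prim_rec n a" "prim_rec n c" for n a c
    using prim_rec_app2[OF Q[unfolded prim_rec_pred_def] that]
    unfolding prim_rec_pred_def by simp
  show "prim_rec 4 (\<lambda>xs. if b (xs ! 2) \<le> xs ! 0 \<and> Q (xs ! 2) (xs ! 1 mod 2 ^ b (xs ! 2))
      then 0 else 1)"
    by (intro b' Q' prim_rec_intros) simp_all
  show "{n. Q n (seg Z (b n))} = {n. \<exists>l m. (\<lambda>xs. if b (xs ! 2) \<le> xs ! 0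
      \<and> Q (xs ! 2) (xs ! 1 mod 2 ^ b (xs ! 2)) then 0 else (1::nat)) [l, seg Z l, n, m] = 0}"
    by (auto simp: seg_mod_power)
qed

lemma turing_red_if_prim_rec_decided:
  assumes Q: "prim_rec_pred 2 (\<lambda>xs. Q (xs ! 0) (xs ! 1))" and b: "prim_rec 1 (\<lambda>xs. b (xs ! 0))"
    and W: "\<And>n. n \<in> W \<longleftrightarrow> Q n (seg Z (b n))"
  shows "turing_red W Z"
proof -
  have "W = {n. Q n (seg Z (b n))}" "- W = {n. \<not> Q n (seg Z (b n))}"
    using W by auto
  then show ?thesis
    unfolding turing_red_def
    using sigma01_set_if_prim_rec_decided[OF Q b] 
      sigma01_set_if_prim_rec_decided[OF prim_rec_pred_not[OF Q] b] by simp
qed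

definition prim_rec_reducible :: "nat set \<Rightarrow> nat set \<Rightarrow> bool" where
  "prim_rec_reducible A B \<longleftrightarrow>
     (\<exists>f b. prim_rec 2 f \<and> prim_rec 1 b \<and> (\<forall>l. seg A l = f [l, seg B (b [l])]))"

lemma prim_rec_reducible_trans:
  assumes "prim_rec_reducible A B" "prim_rec_reducible B C"
  shows "prim_rec_reducible A C"
proof -
  obtain f b where f: "prim_rec 2 f" and b: "prim_rec 1 b" and AB: "\<forall>l. seg A l = f [l, seg B (b [l])]"
    using assms(1) unfolding prim_rec_reducible_def by blast
  obtain g c where g: "prim_rec 2 g" and c: "prim_rec 1 c" and BC: "\<forall>l. seg B l = g [l, seg C (c [l])]"
    using assms(2) unfolding prim_rec_reducible_def by blast
  have "prim_rec 2 (\<lambda>xs. f [xs ! 0, g [b [xs ! 0], xs ! 1]])"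
    by (intro prim_rec_app2[OF f] prim_rec_app2[OF g] prim_rec_app1[OF b] prim_rec_proj) simp_all
  moreover have "prim_rec 1 (\<lambda>xs. c [b [xs ! 0]])"
    by (intro prim_rec_app1[OF c] prim_rec_app1[OF b] prim_rec_proj) simp
  ultimately show ?thesis
    unfolding prim_rec_reducible_def using AB BC by (intro exI conjI) auto
qed

lemma prim_rec_reducible_column:
  assumes "0 < k"
  shows "prim_rec_reducible {i. k * i + j \<in> B} B"
proof -
  have "prim_rec 2 (\<lambda>xs. seg {i. k * i + j \<in> set_decode (xs ! 1)} (xs ! 0))"
    by (intro prim_rec_intros) simp_all
  moreover have "prim_rec 1 (\<lambda>xs. k * xs ! 0 + j)"
    by (intro prim_rec_intros) simp
  moreover have "seg {i. k * i + j \<in> B} l = seg {i. k * i + j \<in> set_decode (seg B (k * l + j))} l" for l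
    using assms by (intro seg_cong) (simp add: set_decode_seg)
  ultimately show ?thesis
    unfolding prim_rec_reducible_def by (intro exI conjI) auto
qed

lemma join_column_left: "{i. 2 * i \<in> join A B} = A"
  by (auto simp: join_def) presburger

lemma join_column_right: "{i. Suc (2 * i) \<in> join A B} = B"
  by (auto simp: join_def) presburger

lemma prim_rec_reducible_join_left: "prim_rec_reducible A (join A B)"
  using prim_rec_reducible_column[of 2 0 "join A B"] by (simp add: join_column_left)

lemma prim_rec_reducible_join_right: "prim_rec_reducible B (join A B)"
  using prim_rec_reducible_column[of 2 1 "join A B"] by (simp add: join_column_right)

lemma turing_red_if_prim_rec_reducible:
  assumes "prim_rec_reducible A B"
  shows "turing_red A B"
proof -
  obtain f b where f: "prim_rec 2 f" and b: "prim_rec 1 b" and AB: "\<forall>l. seg A l = f [l, seg B (b [l])]"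
    using assms unfolding prim_rec_reducible_def by blast
  show ?thesis
  proof (rule turing_red_if_prim_rec_decided)
    show "prim_rec_pred 2 (\<lambda>xs. xs ! 0 \<in> set_decode (f [Suc (xs ! 0), xs ! 1]))"
      by (intro prim_rec_intros prim_rec_app2[OF f]) simp_all
    show "prim_rec 1 (\<lambda>xs. b [Suc (xs ! 0)])"
      by (intro prim_rec_app1[OF b] prim_rec_intros) simp
    show "n \<in> A \<longleftrightarrow> n \<in> set_decode (f [Suc n, seg B (b [Suc n])])" for n
      using AB by (simp flip: AB add: set_decode_seg)
  qed
qed

lemma sigma01_class_prim_rec_reducible:
  assumes "prim_rec_reducible A B" "sigma01_class A \<U>"
  shows "sigma01_class B \<U>"
proof -
  obtain f b where f: "prim_rec 2 f" and b: "prim_rec 1 b" and AB: "\<forall>l. seg A l = f [l, seg B (b [l])]"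
    using assms(1) unfolding prim_rec_reducible_def by blast
  obtain p where p: "PR 4 p" and U: "\<U> = {Y. \<exists>l m. p [l, seg A l, seg Y l, m] = 0}"
    using assms(2) unfolding sigma01_class_def by blast
  define q where "q xs = (if \<exists>l<Suc (xs ! 0). b [l] \<le> xs ! 0
    \<and> p [l, f [l, xs ! 1 mod 2 ^ b [l]], xs ! 2 mod 2 ^ l, xs ! 3] = 0 then 0 else 1 :: nat)" for xs
  show ?thesis
  proof (rule sigma01_classI)
    show "prim_rec 4 q"
      unfolding q_def
      by (intro prim_rec_intros prim_rec_app2[OF f] prim_rec_app1[OF b]
          prim_rec_app4[OF PR_imp_prim_rec[OF p]]) simp_all
    show "\<U> = {Y. \<exists>L m. q [L, seg B L, seg Y L, m] = 0}"
    proof (intro set_eqI iffI)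
      fix Y assume "Y \<in> \<U>"
      then obtain l m where lm: "p [l, seg A l, seg Y l, m] = 0"
        using U by blast
      let ?L = "max l (b [l])"
      have "b [l] \<le> ?L \<and> p [l, f [l, seg B ?L mod 2 ^ b [l]], seg Y ?L mod 2 ^ l, m] = 0"
        using lm AB by (simp add: seg_mod_power)
      then have "q [?L, seg B ?L, seg Y ?L, m] = 0"
        unfolding q_def by (intro if_P exI[of _ l]) simp
      then show "Y \<in> {Y. \<exists>L m. q [L, seg B L, seg Y L, m] = 0}"
        by blast
    next
      fix Y assume "Y \<in> {Y. \<exists>L m. q [L, seg B L, seg Y L, m] = 0}"
      then obtain L m l where "l \<le> L" "b [l] \<le> L"
        "p [l, f [l, seg B L mod 2 ^ b [l]], seg Y L mod 2 ^ l, m] = 0"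
        unfolding q_def by (auto split: if_splits simp: less_Suc_eq_le)
      then have "p [l, seg A l, seg Y l, m] = 0"
        using AB by (simp add: seg_mod_power)
      then show "Y \<in> \<U>"
        using U by blast
    qed
  qed
qed

lemma effective_enum_obtain:
  assumes "effective_enum U"
  obtains p where "PR 5 p" "\<And>Z e. U Z e = {Y. \<exists>l m. p [e, l, seg Z l, seg Y l, m] = 0}"
  using conjunct1[OF assms[unfolded effective_enum_def]] that by blast

lemma effective_enum_upward_closed: "effective_enum U \<Longrightarrow> upward_closed (U Z e)"
  unfolding effective_enum_def by (elim conjE) simp

lemma effective_enum_surj:
  "effective_enum U \<Longrightarrow> sigma01_class Z \<U> \<Longrightarrow> upward_closed \<U> \<Longrightarrow> \<exists>e. U Z e = \<U>"
  unfolding effective_enum_def by (elim conjE) simp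

lemma effective_enum_sigma01_class:
  assumes "effective_enum U"
  shows "sigma01_class Z (U Z e)"
proof -
  obtain p where p: "PR 5 p" and U: "\<And>Z e. U Z e = {Y. \<exists>l m. p [e, l, seg Z l, seg Y l, m] = 0}"
    using assms effective_enum_obtain by blast
  have "prim_rec 4 (\<lambda>xs. p [e, xs ! 0, xs ! 1, xs ! 2, xs ! 3])"
    by (intro prim_rec_app5[OF PR_imp_prim_rec[OF p]] prim_rec_const prim_rec_proj) simp_all
  then show ?thesis
    by (rule sigma01_classI) (simp add: U)
qed

lemma effective_enum_reindex:
  assumes "effective_enum U" "prim_rec_reducible Z' Z"
  obtains e' where "U Z e' = U Z' e"
proof -
  have "sigma01_class Z (U Z' e)"
    by (rule sigma01_class_prim_rec_reducible[OF assms(2) effective_enum_sigma01_class[OF assms(1)]])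
  moreover have "upward_closed (U Z' e)"
    by (rule effective_enum_upward_closed[OF assms(1)])
  ultimately show ?thesis
    using effective_enum_surj[OF assms(1)] that by blast
qed

lemma effective_enum_finite_family:
  assumes "effective_enum U"
  obtains q where "prim_rec 5 q"
    "\<And>Z j. j < k \<Longrightarrow> U Z (E j) = {Y. \<exists>l m. q [j, l, seg Z l, seg Y l, m] = 0}"
proof -
  obtain p where p: "PR 5 p" and U: "\<And>Z e. U Z e = {Y. \<exists>l m. p [e, l, seg Z l, seg Y l, m] = 0}"
    using assms effective_enum_obtain by blast
  define q where "q xs = p [if xs ! 0 < k then E (xs ! 0) else 0, xs ! 1, xs ! 2, xs ! 3, xs ! 4]"
    for xs
  have "prim_rec 5 q"
    unfolding q_def
    by (intro prim_rec_app5[OF PR_imp_prim_rec[OF p]] prim_rec_table prim_rec_proj) simp_all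
  moreover have "U Z (E j) = {Y. \<exists>l m. q [j, l, seg Z l, seg Y l, m] = 0}" if "j < k" for Z j
    using that by (simp add: U q_def)
  ultimately show ?thesis
    using that by blast
qed

lemma scott_set_turing_red: "scott_set S \<Longrightarrow> A \<in> S \<Longrightarrow> turing_red B A \<Longrightarrow> B \<in> S"
  unfolding scott_set_def by blast

lemma scott_set_join: "scott_set S \<Longrightarrow> A \<in> S \<Longrightarrow> B \<in> S \<Longrightarrow> join A B \<in> S"
  unfolding scott_set_def by blast

lemma scott_set_path: "scott_set S \<Longrightarrow> T \<in> S \<Longrightarrow> inf_bin_tree T \<Longrightarrow> \<exists>P\<in>S. is_path P T"
  unfolding scott_set_def by blast

lemma scott_set_prim_rec_reducible:
  "scott_set S \<Longrightarrow> B \<in> S \<Longrightarrow> prim_rec_reducible A B \<Longrightarrow> A \<in> S"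
  using scott_set_turing_red turing_red_if_prim_rec_reducible by blast

lemma scott_set_upper_bound:
  fixes k :: nat
  assumes S: "scott_set S" and "Z\<^sub>0 \<in> S" and F: "\<forall>j<k. F j \<in> S"
  obtains Z where "Z \<in> S" "\<forall>j<k. prim_rec_reducible (F j) Z"
  using F
proof (induction k arbitrary: thesis)
  case 0
  then show ?case using \<open>Z\<^sub>0 \<in> S\<close> by blast
next
  case (Suc k)
  obtain Z where Z: "Z \<in> S" "\<forall>j<k. prim_rec_reducible (F j) Z"
    using Suc.IH Suc.prems(2) by auto
  have "prim_rec_reducible (F j) (join (F k) Z)" if "j < Suc k" for j
  proof (cases "j = k")
    case True
    then show ?thesis using prim_rec_reducible_join_left by simp
  next
    case False
    then have "j < k" using that by simp
    then show ?thesis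
      using Z(2) prim_rec_reducible_join_right prim_rec_reducible_trans by blast
  qed
  moreover have "join (F k) Z \<in> S"
    using scott_set_join[OF S] Suc.prems(2) Z(1) by simp
  ultimately show ?case
    using Suc.prems(1) by auto
qed

lemma inf_bin_tree_if_is_path:
  assumes codes: "\<forall>c\<in>T. \<exists>l S. S \<subseteq> {..<l} \<and> c = strcode l S"
    and prefix_closed: "\<And>l S k. S \<subseteq> {..<l} \<Longrightarrow> strcode l S \<in> T \<Longrightarrow> k \<le> l
      \<Longrightarrow> strcode k (S \<inter> {..<k}) \<in> T"
    and path: "is_path P T"
  shows "inf_bin_tree T"
proof -
  have "inj (\<lambda>l. strcode l (P \<inter> {..<l}))"
    by (rule injI) (metis Int_lower2 strcode_inj)
  then have "infinite (range (\<lambda>l. strcode l (P \<inter> {..<l})))"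
    using finite_imageD infinite_UNIV_nat by blast
  moreover have "range (\<lambda>l. strcode l (P \<inter> {..<l})) \<subseteq> T"
    using path unfolding is_path_def by blast
  ultimately have "infinite T"
    using infinite_super by blast
  then show ?thesis
    unfolding inf_bin_tree_def using codes prefix_closed by simp
qed

section \<open>Covers avoiding finitely many classes\<close>

text \<open>A binary string \<open>S\<close> of length \<open>len\<close> is read as \<open>k\<close> interleaved columns
  \<open>{i. k * i + j \<in> S}\<close>.\<close>

definition cover_string ::
    "(nat list \<Rightarrow> nat) \<Rightarrow> nat \<Rightarrow> (nat \<Rightarrow> nat) \<Rightarrow> nat \<Rightarrow> nat set \<Rightarrow> bool" where
  "cover_string q k z len S \<longleftrightarrow>
     (\<forall>i<len. k * i + k \<le> len \<longrightarrow> (\<exists>j<k. k * i + j \<in> S)) \<and>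
     (\<forall>j<k. \<forall>l<len. k * l \<le> len \<longrightarrow>
        (\<forall>m<len. q [j, l, z l, seg {i. k * i + j \<in> S} l, m] \<noteq> 0))"

definition cover_tree :: "(nat list \<Rightarrow> nat) \<Rightarrow> nat \<Rightarrow> nat set \<Rightarrow> nat set" where
  "cover_tree q k Z = {strcode len S | len S. S \<subseteq> {..<len} \<and> cover_string q k (seg Z) len S}"

lemma column_seg_restrict:
  fixes k :: nat
  assumes "j < k" "k * l \<le> len"
  shows "seg {i. k * i + j \<in> S \<inter> {..<len}} l = seg {i. k * i + j \<in> S} l"
proof (rule seg_cong)
  fix i assume "i < l"
  have "k * i + j < k * Suc i"
    using assms(1) by simp
  also have "\<dots> \<le> k * l"
    using \<open>i < l\<close> by (intro mult_le_mono2) simp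
  finally have "k * i + j < k * l" .
  then show "i \<in> {i. k * i + j \<in> S \<inter> {..<len}} \<longleftrightarrow> i \<in> {i. k * i + j \<in> S}"
    using assms(2) by simp
qed

lemma cover_string_restrict:
  assumes "cover_string q k z len S" "len' \<le> len"
  shows "cover_string q k z len' (S \<inter> {..<len'})"
  unfolding cover_string_def
proof (intro conjI allI impI)
  fix i assume "i < len'" "k * i + k \<le> len'"
  then have "i < len" "k * i + k \<le> len"
    using assms(2) by auto
  then obtain j where "j < k" "k * i + j \<in> S"
    using assms(1) unfolding cover_string_def by blast
  then show "\<exists>j<k. k * i + j \<in> S \<inter> {..<len'}"
    using \<open>k * i + k \<le> len'\<close> by auto
next
  fix j l m assume j: "j < k" and l: "l < len'" "k * l \<le> len'" and m: "m < len'"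
  have "q [j, l, z l, seg {i. k * i + j \<in> S} l, m] \<noteq> 0"
    using assms j l m unfolding cover_string_def by auto
  then show "q [j, l, z l, seg {i. k * i + j \<in> S \<inter> {..<len'}} l, m] \<noteq> 0"
    using column_seg_restrict[OF j l(2)] by simp
qed

lemma cover_string_cong:
  "(\<And>l. l < len \<Longrightarrow> z l = z' l) \<Longrightarrow> cover_string q k z len S = cover_string q k z' len S"
  unfolding cover_string_def by simp

lemma strcode_mem_cover_tree_iff:
  "S \<subseteq> {..<len} \<Longrightarrow> strcode len S \<in> cover_tree q k Z \<longleftrightarrow> cover_string q k (seg Z) len S"
  unfolding cover_tree_def using strcode_inj by blast

lemma inf_bin_tree_cover_tree:
  assumes "\<And>len. cover_string q k (seg Z) len (P \<inter> {..<len})"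
  shows "inf_bin_tree (cover_tree q k Z)"
proof (rule inf_bin_tree_if_is_path)
  show "\<forall>c\<in>cover_tree q k Z. \<exists>l S. S \<subseteq> {..<l} \<and> c = strcode l S"
    unfolding cover_tree_def by blast
  show "strcode k' (S \<inter> {..<k'}) \<in> cover_tree q k Z"
    if "S \<subseteq> {..<l}" "strcode l S \<in> cover_tree q k Z" "k' \<le> l" for l S k'
    using that cover_string_restrict by (simp add: strcode_mem_cover_tree_iff)
  show "is_path P (cover_tree q k Z)"
    unfolding is_path_def using assms by (simp add: strcode_mem_cover_tree_iff)
qed

text \<open>Membership in the cover tree is decided from the segment of \<open>Z\<close> of length \<open>n\<close>,
  since a code \<open>n = prod_encode (len, s)\<close> bounds both \<open>len\<close> and \<open>s\<close>.\<close>

lemma mem_cover_tree_iff: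
  "n \<in> cover_tree q k Z \<longleftrightarrow> (\<exists>len<Suc n. \<exists>s<Suc n. n = prod_encode (len, s) \<and> s < 2 ^ len
     \<and> cover_string q k (\<lambda>l. seg Z n mod 2 ^ l) len (set_decode s))"
    (is "_ \<longleftrightarrow> (\<exists>len<Suc n. \<exists>s<Suc n. ?code len s)")
proof
  assume "n \<in> cover_tree q k Z"
  then obtain len S where S: "S \<subseteq> {..<len}" "n = strcode len S" "cover_string q k (seg Z) len S"
    unfolding cover_tree_def by (elim CollectE exE conjE) simp
  have n: "n = prod_encode (len, set_encode S)"
    using S(2) unfolding strcode_def .
  have "len \<le> n" "set_encode S \<le> n"
    using le_prod_encode_1[of len "set_encode S"] le_prod_encode_2[of "set_encode S" len] n by simp_all
  moreover have "cover_string q k (\<lambda>l. seg Z n mod 2 ^ l) len S = cover_string q k (seg Z) len S"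
    by (intro cover_string_cong seg_mod_power) (use \<open>len \<le> n\<close> in linarith)
  then have "cover_string q k (\<lambda>l. seg Z n mod 2 ^ l) len S"
    using S(3) by simp
  moreover have "set_decode (set_encode S) = S"
    using finite_subset[OF S(1)] by simp
  ultimately have "?code len (set_encode S)"
    using n set_encode_less_power[OF S(1)] by (simp only:)
  moreover have "len < Suc n" "set_encode S < Suc n"
    using \<open>len \<le> n\<close> \<open>set_encode S \<le> n\<close> by simp_all
  ultimately show "\<exists>len<Suc n. \<exists>s<Suc n. ?code len s"
    by blast
next
  assume "\<exists>len<Suc n. \<exists>s<Suc n. ?code len s"
  then obtain len s where len: "len < Suc n" and code: "?code len s"
    by blast
  have eq: "cover_string q k (\<lambda>l. seg Z n mod 2 ^ l) len (set_decode s)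
      = cover_string q k (seg Z) len (set_decode s)"
    by (intro cover_string_cong seg_mod_power) (use len in linarith)
  have "n = strcode len (set_decode s)"
    using code by (simp add: strcode_def)
  moreover have "set_decode s \<subseteq> {..<len}"
    using code set_decode_subset_lessThan by blast
  moreover have "cover_string q k (seg Z) len (set_decode s)"
    using code unfolding eq by blast
  ultimately show "n \<in> cover_tree q k Z"
    unfolding cover_tree_def by blast
qed

lemma cover_tree_in_scott_set:
  assumes S: "scott_set S" and Z: "Z \<in> S" and q: "prim_rec 5 q"
  shows "cover_tree q k Z \<in> S"
proof -
  have "prim_rec_pred 2 (\<lambda>xs. \<exists>len<Suc (xs ! 0). \<exists>s<Suc (xs ! 0).
      xs ! 0 = prod_encode (len, s) \<and> s < 2 ^ len
      \<and> cover_string q k (\<lambda>l. xs ! 1 mod 2 ^ l) len (set_decode s))"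
    unfolding cover_string_def
    by (intro prim_rec_intros prim_rec_app5[OF q]) simp_all
  then have "turing_red (cover_tree q k Z) Z"
    by (rule turing_red_if_prim_rec_decided[where b = "\<lambda>n. n"])
      (simp_all add: prim_rec_proj mem_cover_tree_iff)
  then show ?thesis
    using scott_set_turing_red S Z by blast
qed

definition interleave :: "nat \<Rightarrow> (nat \<Rightarrow> nat set) \<Rightarrow> nat set" where
  "interleave k Y = {k * i + j | i j. j < k \<and> i \<in> Y j}"

lemma column_interleave:
  fixes k :: nat
  assumes "j < k"
  shows "{i. k * i + j \<in> interleave k Y} = Y j"
proof -
  have "k * i + j = k * i' + j' \<Longrightarrow> j' < k \<Longrightarrow> i = i' \<and> j = j'" for i i' j'
    using assms by (metis add.commute div_mult_self1 div_less mod_mult_self1 mod_less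
        add_0 not_less0 mult.commute gr_implies_not0)
  then show ?thesis
    unfolding interleave_def using assms by blast
qed

lemma cover_string_interleave:
  fixes k :: nat
  assumes cover: "(\<Union>j<k. Y j) = UNIV"
    and avoid: "\<And>j l m. j < k \<Longrightarrow> q [j, l, z l, seg (Y j) l, m] \<noteq> 0"
  shows "cover_string q k z len (interleave k Y \<inter> {..<len})"
  unfolding cover_string_def
proof (intro conjI allI impI)
  fix i assume "k * i + k \<le> len"
  obtain j where "j < k" "i \<in> Y j"
    using cover by blast
  then show "\<exists>j<k. k * i + j \<in> interleave k Y \<inter> {..<len}"
    using \<open>k * i + k \<le> len\<close> column_interleave[of j k Y] by auto
next
  fix j l m assume "j < k" "k * l \<le> len"
  then show "q [j, l, z l, seg {i. k * i + j \<in> interleave k Y \<inter> {..<len}} l, m] \<noteq> 0"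
    using avoid column_seg_restrict column_interleave by simp
qed

lemma cover_string_columns:
  fixes k :: nat
  assumes "0 < k" and P: "\<And>len. cover_string q k z len (P \<inter> {..<len})"
  shows "(\<Union>j<k. {i. k * i + j \<in> P}) = UNIV"
    and "\<And>j l m. j < k \<Longrightarrow> q [j, l, z l, seg {i. k * i + j \<in> P} l, m] \<noteq> 0"
proof -
  show "(\<Union>j<k. {i. k * i + j \<in> P}) = UNIV"
  proof (intro set_eqI iffI)
    fix i
    have "i \<le> k * i"
      using \<open>0 < k\<close> by simp
    then have "i < k * i + k"
      using \<open>0 < k\<close> by linarith
    then show "i \<in> (\<Union>j<k. {i. k * i + j \<in> P})"
      using P[of "k * i + k"] unfolding cover_string_def by blast
  qed simp
next
  fix j l m assume "j < k"
  let ?len = "Suc (k * l + l + m)"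
  have "q [j, l, z l, seg {i. k * i + j \<in> P \<inter> {..<?len}} l, m] \<noteq> 0"
    using P[of ?len] \<open>j < k\<close> unfolding cover_string_def by simp
  then show "q [j, l, z l, seg {i. k * i + j \<in> P} l, m] \<noteq> 0"
    using column_seg_restrict[OF \<open>j < k\<close>, of l ?len P] by simp
qed

lemma scott_set_cover_avoiding:
  fixes k :: nat
  assumes enum: "effective_enum U" and S: "scott_set S" and Z: "Z \<in> S"
    and cover: "(\<Union>j<k. Y j) = UNIV" and avoid: "\<forall>j<k. Y j \<notin> U Z (E j)"
  obtains Y' where "(\<Union>j<k. Y' j) = UNIV" "\<forall>j<k. Y' j \<in> S \<and> Y' j \<notin> U Z (E j)"
proof -
  obtain q where q: "prim_rec 5 q"
    and U: "\<And>Z j. j < k \<Longrightarrow> U Z (E j) = {Y. \<exists>l m. q [j, l, seg Z l, seg Y l, m] = 0}"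
    using effective_enum_finite_family[OF enum] by blast
  have "0 < k"
    using cover by (cases k) auto
  have "cover_string q k (seg Z) len (interleave k Y \<inter> {..<len})" for len
    by (rule cover_string_interleave[OF cover]) (use avoid U in auto)
  then have "inf_bin_tree (cover_tree q k Z)"
    by (rule inf_bin_tree_cover_tree)
  then obtain P where "P \<in> S" and "is_path P (cover_tree q k Z)"
    using scott_set_path[OF S cover_tree_in_scott_set[OF S Z q]] by blast
  then have P: "cover_string q k (seg Z) len (P \<inter> {..<len})" for len
    unfolding is_path_def by (simp add: strcode_mem_cover_tree_iff)
  show thesis
  proof (rule that)
    show "(\<Union>j<k. {i. k * i + j \<in> P}) = UNIV"
      by (rule cover_string_columns(1)[OF \<open>0 < k\<close> P])
    show "\<forall>j<k. {i. k * i + j \<in> P} \<in> S \<and> {i. k * i + j \<in> P} \<notin> U Z (E j)"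
      using cover_string_columns(2)[OF \<open>0 < k\<close> P] U
        scott_set_prim_rec_reducible[OF S \<open>P \<in> S\<close> prim_rec_reducible_column[OF \<open>0 < k\<close>]]
      by auto
  qed
qed

section \<open>The generated class\<close>

lemma upward_closed_Inter: "(\<And>\<A>. \<A> \<in> F \<Longrightarrow> upward_closed \<A>) \<Longrightarrow> upward_closed (\<Inter>F)"
  unfolding upward_closed_def by blast

lemma upward_closed_Int: "upward_closed \<A> \<Longrightarrow> upward_closed \<B> \<Longrightarrow> upward_closed (\<A> \<inter> \<B>)"
  unfolding upward_closed_def by blast

lemma largeness_mono: "largeness \<B> \<Longrightarrow> \<B> \<subseteq> \<A> \<Longrightarrow> upward_closed \<A> \<Longrightarrow> largeness \<A>"
  unfolding largeness_def by blast

lemma largenessI: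
  fixes \<A> :: "nat set set"
  assumes "\<A> \<noteq> {}" "upward_closed \<A>" "\<And>(k :: nat) Y. (\<Union>j<k. Y j) = UNIV \<Longrightarrow> \<exists>j<k. Y j \<in> \<A>"
  shows "largeness \<A>"
  unfolding largeness_def using assms by blast

lemma largeness_cover:
  fixes k :: nat
  shows "largeness \<A> \<Longrightarrow> (\<Union>j<k. Y j) = UNIV \<Longrightarrow> \<exists>j<k. Y j \<in> \<A>"
  unfolding largeness_def by blast

lemma largeness_mem_or_compl:
  assumes "largeness \<A>"
  shows "Y \<in> \<A> \<or> - Y \<in> \<A>"
proof -
  define W where "W j = (if j = 0 then Y else - Y)" for j :: nat
  have "x \<in> W 0 \<union> W 1" for x
    unfolding W_def by auto
  then have "(\<Union>j<2. W j) = UNIV"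
    by (auto simp: lessThan_nat_numeral)
  then obtain j where "j < 2" "W j \<in> \<A>"
    using largeness_cover[OF assms] by blast
  then show ?thesis
    unfolding W_def by (auto split: if_splits)
qed

text \<open>Cohesiveness forces \<open>\<A> \<subseteq> LL Y\<close>, which keeps \<open>- Y\<close> out of \<open>\<A>\<close>; so the
  cover \<open>{Y, - Y}\<close> puts \<open>Y\<close> into every largeness subclass.\<close>

lemma mem_largeness_subclass_if_M_cohesive:
  assumes coh: "M_cohesive \<M> \<A>" and Y: "Y \<in> \<M>" "Y \<in> \<A>"
    and large: "largeness \<B>" and sub: "\<B> \<subseteq> \<A>"
  shows "Y \<in> \<B>"
proof -
  have "\<not> \<A> \<subseteq> LL (- Y)"
    using Y(2) unfolding LL_def by auto
  then have "\<A> \<subseteq> LL Y"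
    using coh Y(1) unfolding M_cohesive_def by blast
  then have "- Y \<notin> \<A>"
    unfolding LL_def by auto
  then show ?thesis
    using largeness_mem_or_compl[OF large] sub by blast
qed

lemma upward_closed_UMC: "effective_enum U \<Longrightarrow> upward_closed (UMC U X C)"
  unfolding UMC_def by (rule upward_closed_Inter) (auto simp: effective_enum_upward_closed)

lemma upward_closed_gen_class: "effective_enum U \<Longrightarrow> upward_closed (gen_class U X C)"
  unfolding gen_class_def by (rule upward_closed_Inter) (auto simp: effective_enum_upward_closed)

lemma gen_class_subset:
  "Z \<in> range X \<Longrightarrow> largeness (UMC U X C \<inter> U Z e) \<Longrightarrow> gen_class U X C \<subseteq> U Z e"
  unfolding gen_class_def by (rule Inter_lower) blast

lemma not_mem_gen_class_iff:
  "Y \<notin> gen_class U X C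
     \<longleftrightarrow> (\<exists>Z e. Z \<in> range X \<and> largeness (UMC U X C \<inter> U Z e) \<and> Y \<notin> U Z e)"
  unfolding gen_class_def by blast

lemma gen_class_subset_UMC:
  assumes "largeness (UMC U X C)"
  shows "gen_class U X C \<subseteq> UMC U X C"
  unfolding UMC_def[of U X C]
proof (rule Inter_greatest)
  fix \<U> assume "\<U> \<in> {U (X i) e | e i. (e, i) \<in> C}"
  then obtain e i where "\<U> = U (X i) e" "(e, i) \<in> C"
    by blast
  moreover from this have "UMC U X C \<inter> U (X i) e = UMC U X C"
    unfolding UMC_def by blast
  ultimately show "gen_class U X C \<subseteq> \<U>"
    using gen_class_subset[of "X i" X U C e] assms by simp
qed

lemma M_minimal_gen_class:
  assumes "effective_enum U" "largeness (UMC U X C)"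
  shows "M_minimal U (range X) (gen_class U X C)"
  unfolding M_minimal_def
proof (intro ballI allI)
  fix Z e assume "Z \<in> range X"
  show "gen_class U X C \<subseteq> U Z e \<or> \<not> largeness (gen_class U X C \<inter> U Z e)"
  proof (cases "largeness (UMC U X C \<inter> U Z e)")
    case True
    then show ?thesis
      using gen_class_subset \<open>Z \<in> range X\<close> by blast
  next
    case False
    have "gen_class U X C \<inter> U Z e \<subseteq> UMC U X C \<inter> U Z e"
      using gen_class_subset_UMC[OF assms(2)] by blast
    moreover have "upward_closed (UMC U X C \<inter> U Z e)"
      by (intro upward_closed_Int upward_closed_UMC effective_enum_upward_closed assms(1))
    ultimately show ?thesis
      using False largeness_mono by blast
  qed
qed

lemma gen_class_partition_regular:
  fixes k :: nat
  assumes enum: "effective_enum U" and S: "scott_set (range X)"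
    and large: "largeness (UMC U X C)" and coh: "M_cohesive (range X) (UMC U X C)"
    and cover: "(\<Union>j<k. Y j) = UNIV"
  shows "\<exists>j<k. Y j \<in> gen_class U X C"
proof (rule ccontr)
  let ?A = "UMC U X C"
  assume no_piece: "\<not> (\<exists>j<k. Y j \<in> gen_class U X C)"
  have "\<exists>Z e. Z \<in> range X \<and> largeness (?A \<inter> U Z e) \<and> Y j \<notin> U Z e" if "j < k" for j
    using no_piece not_mem_gen_class_iff[of "Y j" U X C] that by blast
  then obtain Zf Ef where ZE: "\<forall>j<k. Zf j \<in> range X \<and> largeness (?A \<inter> U (Zf j) (Ef j))
      \<and> Y j \<notin> U (Zf j) (Ef j)"
    by metis
  then have "\<forall>j<k. Zf j \<in> range X"
    by blast
  then obtain Z where Z: "Z \<in> range X" "\<forall>j<k. prim_rec_reducible (Zf j) Z"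
    by (rule scott_set_upper_bound[OF S rangeI])
  have "\<exists>e. j < k \<longrightarrow> U Z e = U (Zf j) (Ef j)" for j
    using effective_enum_reindex[OF enum] Z(2) by blast
  then obtain E where E: "\<forall>j<k. U Z (E j) = U (Zf j) (Ef j)"
    using choice[of "\<lambda>j e. j < k \<longrightarrow> U Z e = U (Zf j) (Ef j)"] by blast
  have "\<forall>j<k. Y j \<notin> U Z (E j)"
    using ZE E by simp
  then obtain Y' where Y': "(\<Union>j<k. Y' j) = UNIV" "\<forall>j<k. Y' j \<in> range X \<and> Y' j \<notin> U Z (E j)"
    by (rule scott_set_cover_avoiding[OF enum S Z(1) cover])
  obtain j where j: "j < k" "Y' j \<in> ?A"
    using largeness_cover[OF large Y'(1)] by blast
  have "largeness (?A \<inter> U Z (E j))"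
    using ZE E j(1) by simp
  then have "Y' j \<in> U Z (E j)"
    using mem_largeness_subclass_if_M_cohesive[OF coh _ j(2)] Y'(2) j(1) by blast
  then show False
    using Y'(2) j(1) by blast
qed

theorem lemma2p11:
  fixes U :: "nat set \<Rightarrow> nat \<Rightarrow> nat set set"
    and X :: "nat \<Rightarrow> nat set"
    and C :: "(nat \<times> nat) set"
  assumes "effective_enum U"
    and "scott_set (range X)"
    and "largeness (UMC U X C)"
    and "M_cohesive (range X) (UMC U X C)"
  shows "largeness (gen_class U X C) \<and> M_minimal U (range X) (gen_class U X C)
         \<and> gen_class U X C \<subseteq> UMC U X C"
proof -
  have "gen_class U X C \<noteq> {}"
    using gen_class_partition_regular[OF assms, where k = 1 and Y = "\<lambda>_. UNIV"] by (auto simp: lessThan_Suc)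
  then have "largeness (gen_class U X C)"
    by (rule largenessI[OF _ upward_closed_gen_class[OF assms(1)] gen_class_partition_regular[OF assms]])
  then show ?thesis
    using M_minimal_gen_class[OF assms(1,3)] gen_class_subset_UMC[OF assms(3)] by blast
qed

end
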